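(* Let $k,t\ge1$ and let $V$ be a word of length $kt$ that has at most $k$ distinct subwords of length $k$. Then $V$ contains a subword of the form $v^t$ for some nonempty word $v$.
   Context: A subword is a contiguous factor. *)

theory Defs
  imports Main "HOL-Library.Sublist"
begin

end

theory Submission
  imports Defs
begin

text \<open>Let \<open>n = k t\<close> and \<open>N = n - k + 1\<close>, and let \<open>R j\<close> count the factors of length \<open>j\<close>
  starting before position \<open>N\<close>. Then \<open>R\<close> is monotone on \<open>[0, k]\<close>, \<open>R 0 = 1\<close> and
  \<open>R k \<le> k\<close>, so for some \<open>j < k\<close> we have \<open>R (j + 1) = R j \<le> j + 1\<close>: every window of
  length \<open>j\<close> determines the letter following it. By pigeonhole two of the first
  \<open>R j + 1\<close> windows of length \<open>j\<close> coincide, at positions \<open>a < b \<le> j + 1\<close>, and determinism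
  propagates this to the period \<open>c = b - a\<close> on the stretch \<open>[a, N + j)\<close> of \<open>V\<close>. Its length
  is at least \<open>n - k + c \<ge> t c\<close>, so it begins with a \<open>t\<close>-th power.\<close>

lemma sublist_take_drop: "sublist (take m (drop i xs)) xs"
  using sublist_order.order_trans by blast

lemma nth_add_mult_period:
  assumes period: "\<And>m. m + c < length s \<Longrightarrow> s ! m = s ! (m + c)"
  shows "i + q * c < length s \<Longrightarrow> s ! (i + q * c) = s ! i"
proof (induction q)
  case (Suc q)
  then have "s ! (i + q * c) = s ! i" by simp
  with period[of "i + q * c"] Suc.prems show ?case by (simp add: add.assoc add.commute[of c])
qed simp

lemma take_mult_period_eq_power:
  assumes period: "\<And>m. m + c < length s \<Longrightarrow> s ! m = s ! (m + c)"
  shows "t * c \<le> length s \<Longrightarrow> take (t * c) s = concat (replicate t (take c s))"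
proof (induction t)
  case (Suc t)
  have "take c (drop (t * c) s) = take c s"
    using Suc.prems nth_add_mult_period[OF period, of _ t]
    by (intro nth_equalityI) (auto simp: add.commute)
  moreover have "take (Suc t * c) s = take (t * c) s @ take c (drop (t * c) s)"
    by (metis add.commute mult_Suc take_add)
  ultimately show ?case
    using Suc by (simp flip: replicate_append_same)
qed simp

lemma ex_power_sublist_if_periodic:
  assumes "0 < c" and "0 < t"
    and period: "\<And>m. a \<le> m \<Longrightarrow> m + c < L \<Longrightarrow> V ! m = V ! (m + c)"
    and "a + t * c \<le> L" and "L \<le> length V"
  shows "\<exists>v. v \<noteq> [] \<and> sublist (concat (replicate t v)) V"
proof -
  define s where "s = take (L - a) (drop a V)"
  have "s ! m = s ! (m + c)" if "m + c < length s" for m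
  proof -
    have "a + m + c < L" "a + m + c < length V"
      using that by (auto simp: s_def)
    then show ?thesis
      using period[of "a + m"] by (simp add: s_def add.assoc)
  qed
  moreover have "t * c \<le> length s"
    using assms(4,5) by (simp add: s_def)
  ultimately have "concat (replicate t (take c s)) = take (t * c) s"
    using take_mult_period_eq_power by metis
  moreover have "take c s \<noteq> []"
    using assms(1,2) \<open>t * c \<le> length s\<close> by auto
  moreover have "sublist (take (t * c) s) V"
    unfolding s_def by (metis sublist_take_drop take_take)
  ultimately show ?thesis by metis
qed

lemma ex_step_not_increasing:
  fixes f :: "nat \<Rightarrow> nat"
  assumes "0 < f 0" and "f k \<le> k"
  shows "\<exists>j<k. f (Suc j) \<le> f j \<and> f (Suc j) \<le> Suc j"
  using assms(2)
proof (induction k)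
  case 0
  with assms(1) show ?case by simp
next
  case (Suc k)
  show ?case
  proof (cases "f (Suc k) \<le> f k")
    case True
    with Suc.prems show ?thesis by blast
  next
    case False
    with Suc.prems Suc.IH show ?thesis by (meson less_SucI not_le order_less_le_trans less_Suc_eq_le)
  qed
qed

text \<open>The number of distinct factors of a finite word need not grow with their length. Counting
  only windows that start before a fixed position \<open>N\<close> makes every shorter window a prefix of a
  longer one, so the counts become monotone.\<close>

definition windows :: "'a list \<Rightarrow> nat \<Rightarrow> nat \<Rightarrow> 'a list set" where
  "windows V N j = (\<lambda>i. take j (drop i V)) ` {..<N}"

lemma take_windows: "j \<le> k \<Longrightarrow> take j ` windows V N k = windows V N j"
  unfolding windows_def image_image by (simp add: min_absorb1)

lemma finite_windows [simp]: "finite (windows V N j)"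
  by (simp add: windows_def)

lemma card_windows_mono: "j \<le> k \<Longrightarrow> card (windows V N j) \<le> card (windows V N k)"
  by (metis card_image_le finite_windows take_windows)

lemma card_windows_0: "0 < N \<Longrightarrow> card (windows V N 0) = 1"
  by (auto simp: windows_def image_constant_conv)

lemma window_determines_next:
  assumes "card (windows V N (Suc j)) \<le> card (windows V N j)"
    and "i < N" "i' < N" "take j (drop i V) = take j (drop i' V)"
  shows "take (Suc j) (drop i V) = take (Suc j) (drop i' V)"
proof -
  have "card (take j ` windows V N (Suc j)) = card (windows V N (Suc j))"
    using assms(1) card_image_le[of "windows V N (Suc j)" "take j"] take_windows[of j "Suc j" V N]
    by simp
  then have "inj_on (take j) (windows V N (Suc j))"
    by (simp add: eq_card_imp_inj_on)
  moreover have "take (Suc j) (drop i V) \<in> windows V N (Suc j)"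
    "take (Suc j) (drop i' V) \<in> windows V N (Suc j)"
    using assms(2,3) by (auto simp: windows_def)
  ultimately show ?thesis
    using assms(4) by (simp add: inj_on_def min_absorb1)
qed

lemma ex_repeated_window:
  assumes "card (windows V N j) < N"
  shows "\<exists>a b. a < b \<and> b \<le> card (windows V N j) \<and> take j (drop a V) = take j (drop b V)"
proof -
  let ?R = "card (windows V N j)"
  have "(\<lambda>i. take j (drop i V)) ` {..?R} \<subseteq> windows V N j"
    using assms by (auto simp: windows_def)
  then have "\<not> inj_on (\<lambda>i. take j (drop i V)) {..?R}"
    using card_inj_on_le[of _ "{..?R}" "windows V N j"] by fastforce
  then obtain x y where "x \<le> ?R" "y \<le> ?R" "x \<noteq> y" "take j (drop x V) = take j (drop y V)"
    unfolding inj_on_def by auto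
  then show ?thesis
    by (metis linorder_neqE_nat)
qed

lemma periodic_if_window_determines_next:
  assumes determined: "\<And>i i'. i < N \<Longrightarrow> i' < N \<Longrightarrow> take j (drop i V) = take j (drop i' V)
      \<Longrightarrow> take (Suc j) (drop i V) = take (Suc j) (drop i' V)"
    and repeat: "take j (drop a V) = take j (drop (a + c) V)"
    and "a + c < N" and "N + j \<le> length V"
  shows "a \<le> m \<Longrightarrow> m + c < N + j \<Longrightarrow> V ! m = V ! (m + c)"
proof (induction m rule: less_induct)
  case (less m)
  show ?case
  proof (cases "m < a + j")
    case True
    then have "take j (drop a V) ! (m - a) = take j (drop (a + c) V) ! (m - a)"
      by (simp add: repeat)
    with True less.prems assms(3,4) show ?thesis
      by (simp add: add.commute add.left_commute)
  next
    case False
    define i where "i = m - j"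
    have "take j (drop i V) = take j (drop (i + c) V)"
      using False less.prems assms(4) less.IH
      by (intro nth_equalityI) (auto simp: i_def add.commute add.left_commute)
    then have "take (Suc j) (drop i V) ! j = take (Suc j) (drop (i + c) V) ! j"
      using determined[of i "i + c"] False less.prems by (simp add: i_def)
    with False less.prems assms(4) show ?thesis
      by (simp add: i_def add.commute add.left_commute)
  qed
qed

lemma card_windows_le_card_factors:
  assumes "N + k \<le> Suc (length V)"
  shows "card (windows V N k) \<le> card {w. sublist w V \<and> length w = k}"
proof (rule card_mono)
  show "finite {w. sublist w V \<and> length w = k}"
    by (rule finite_subset[of _ "set (sublists V)"]) auto
  show "windows V N k \<subseteq> {w. sublist w V \<and> length w = k}"
    using assms by (auto simp: windows_def sublist_take_drop)
qed

lemma ex_window_length_determining_next: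
  assumes "0 < N" and "card (windows V N k) \<le> k"
  shows "\<exists>j<k. card (windows V N (Suc j)) \<le> card (windows V N j)
    \<and> card (windows V N j) \<le> Suc j"
proof -
  obtain j where "j < k" "card (windows V N (Suc j)) \<le> card (windows V N j)"
    "card (windows V N (Suc j)) \<le> Suc j"
    using ex_step_not_increasing[of "\<lambda>j. card (windows V N j)"] assms
    by (auto simp: card_windows_0)
  then show ?thesis
    using card_windows_mono[of j "Suc j" V N] by auto
qed

lemma ex_periodic_stretch:
  assumes determined: "card (windows V N (Suc j)) \<le> card (windows V N j)"
    and "card (windows V N j) \<le> Suc j" and "Suc j < N" and "N + j \<le> length V"
  shows "\<exists>a c. 0 < c \<and> a + c \<le> Suc j \<and> (\<forall>m. a \<le> m \<longrightarrow> m + c < N + j \<longrightarrow> V ! m = V ! (m + c))"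
proof -
  obtain a b where ab: "a < b" "b \<le> Suc j" "take j (drop a V) = take j (drop b V)"
    using ex_repeated_window[of V N j] assms(2,3) by fastforce
  have "V ! m = V ! (m + (b - a))" if "a \<le> m" "m + (b - a) < N + j" for m
  proof (rule periodic_if_window_determines_next[OF _ _ _ assms(4) that])
    show "take (Suc j) (drop i V) = take (Suc j) (drop i' V)"
      if "i < N" "i' < N" "take j (drop i V) = take j (drop i' V)" for i i'
      using window_determines_next[OF determined that] .
    show "take j (drop a V) = take j (drop (a + (b - a)) V)"
      using ab(1,3) by simp
    show "a + (b - a) < N"
      using ab(1,2) assms(3) by linarith
  qed
  moreover have "0 < b - a" "a + (b - a) \<le> Suc j"
    using ab(1,2) by simp_all
  ultimately show ?thesis
    by blast
qed

theorem lemmac: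
  fixes V :: "'a list" and k t :: nat
  assumes "k \<ge> 1" and "t \<ge> 1"
    and "length V = k * t"
    and "card {w. sublist w V \<and> length w = k} \<le> k"
  shows "\<exists>v. v \<noteq> [] \<and> sublist (concat (replicate t v)) V"
proof (cases "t = 1")
  case True
  have "V ! m = V ! (m + k)" if "0 \<le> m" "m + k < length V" for m
    using that True assms(3) by simp
  then show ?thesis
    using ex_power_sublist_if_periodic[of k t 0 "length V" V] assms by simp
next
  case False
  define N where "N = length V - k + 1"
  have "k * 2 \<le> length V"
    using False assms(2,3) by (simp add: mult_le_mono2)
  then have "k < N" "N + k = Suc (length V)"
    using assms(1) by (simp_all add: N_def)
  then obtain j where j: "j < k" "card (windows V N (Suc j)) \<le> card (windows V N j)"
    "card (windows V N j) \<le> Suc j"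
    using ex_window_length_determining_next[of N V k] card_windows_le_card_factors[of N k V] assms(4)
    by force
  then obtain a c where "0 < c" "a + c \<le> Suc j"
    and period: "\<forall>m. a \<le> m \<longrightarrow> m + c < N + j \<longrightarrow> V ! m = V ! (m + c)"
    using ex_periodic_stretch[of V N j] \<open>k < N\<close> \<open>N + k = Suc (length V)\<close> by fastforce
  have "a + t * c = (a + c) + (t - 1) * c"
    using assms(2) by (cases t) simp_all
  also have "\<dots> \<le> Suc j + (t - 1) * k"
    using \<open>a + c \<le> Suc j\<close> j(1) by (intro add_mono mult_le_mono2) simp_all
  also have "\<dots> = N + j"
    using assms(3) False by (simp add: N_def diff_mult_distrib2 mult.commute)
  finally show ?thesis
    using ex_power_sublist_if_periodic[of c t a "N + j" V] period \<open>0 < c\<close> assms(2) j(1)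
      \<open>N + k = Suc (length V)\<close> by simp
qed

end
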